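(* Let $k\ge1$ and put $c_0=0$, $c_j=3^{j-1}\cdot100^{(k-1)^2}$ for $j=1,\dots,k+1$, and $c_{k+2}=100^{k^2}$; let $\xi_i=c_i-c_{i-1}-1$ for $i=1,\dots,k+2$. Let $$E=A(\xi_1)\,x_{c_0}\,A(\xi_2)\,x_{c_1}\,A(\xi_3)\,x_{c_2}\cdots x_{c_k}\,A(\xi_{k+2}),$$ and for a permutation $\sigma$ of $\{c_0,\dots,c_k\}$ let $E^\sigma=A(\xi_1)x_{\sigma(c_0)}A(\xi_2)x_{\sigma(c_1)}\cdots x_{\sigma(c_k)}A(\xi_{k+2})$. Let $a\in A(100^{k^2}-1)$ with $a\in B_1+\dots+B_k$, and suppose that for every permutation $\sigma$ other than the identity, no summand of $a$ lies in $E^\sigma$. Let $\bar b$ be the sum of all summands of $a$ that lie in $E$. Then $\bar b\in B_1+\dots+B_{k-1}$ (interpreted as $\{0\}$ when $k=1$).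
   Context: Let $K$ be a field and $A$ the free associative (non-unital) $K$-algebra on free generators $x_0,x_1,x_2,\dots$, with $K$-basis of monomials; $A^1$ is $A$ with unity adjoined. For $n\ge1$, $A(n)$ is the $K$-span of monomials of length $n$, and $A(0)=K$; a product of subspaces such as $E$ means the $K$-span of the corresponding products. A summand of $a\in A$ is a term $\kappa s$ ($\kappa\ne0$, $s$ a monomial) occurring in the expansion of $a$ in the monomial basis; it "lies in" a span of monomials if $s$ does. For a monomial $s=x_{i_1}\cdots x_{i_n}$ write $s[q]=x_{i_q}$. For $j\ge1$, $Z_j$ is the set of all elements $a\in A$ of one of the forms: (1) $a=\kappa s$, $\kappa\in K$, $s$ a monomial of length $100^{j^2}-1$ with $s[3^p\cdot100^{(j-1)^2}]=s[3^q\cdot100^{(j-1)^2}]$ for some $0\le p<q\le j$; (2) $a=\kappa(s_1+s_2)$, $\kappa\in K$, $s_1,s_2$ monomials of length $100^{j^2}-1$, with integers $0\le p<q\le j$ and $l_1>l_2\ge0$ such that $s_1$ has $x_{l_1}$ at position $3^p\cdot100^{(j-1)^2}$ and $x_{l_2}$ at position $3^q\cdot100^{(j-1)^2}$, $s_2$ has $x_{l_2}$ and $x_{l_1}$ at these positions respectively, and $s_1,s_2$ agree at all other positions. $B_j=\sum_{m\ge0}A(m\cdot100^{j^2})\,Z_j\,A^1$ (the $K$-span of products $uzv$ with $u\in A(m\cdot100^{j^2})$, $m\ge0$, $z\in Z_j$, $v\in A^1$). *)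

theory Defs
  imports "HOL-Combinatorics.Permutations"
begin

text \<open>Elements of the unital free algebra A^1 on generators x_0, x_1, ... over a field are
  represented as coefficient functions on monomials (words = nat lists; letter i stands for x_i).
  Only finitely supported functions arise (everything is generated as K-spans of monomials).\<close>

type_synonym 'a fa = "nat list \<Rightarrow> 'a"

definition mono :: "nat list \<Rightarrow> 'a::field fa" where
  "mono s = (\<lambda>w. if w = s then 1 else 0)"

definition fa_mult :: "'a::field fa \<Rightarrow> 'a fa \<Rightarrow> 'a fa" where
  "fa_mult f g = (\<lambda>w. \<Sum>i\<le>length w. f (take i w) * g (drop i w))"

inductive_set kspan :: "'a::field fa set \<Rightarrow> 'a fa set" for S where
  zero: "(\<lambda>_. 0) \<in> kspan S"
| gen: "f \<in> S \<Longrightarrow> f \<in> kspan S"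
| add: "f \<in> kspan S \<Longrightarrow> g \<in> kspan S \<Longrightarrow> (\<lambda>w. f w + g w) \<in> kspan S"
| smul: "f \<in> kspan S \<Longrightarrow> (\<lambda>w. c * f w) \<in> kspan S"

definition Adeg :: "nat \<Rightarrow> 'a::field fa set" where
  "Adeg n = kspan {mono s | s. length s = n}"

definition Aone :: "'a::field fa set" where
  "Aone = kspan (range mono)"

text \<open>s[q] (1-indexed position) is s ! (q - 1).\<close>
definition posZ :: "nat \<Rightarrow> nat \<Rightarrow> nat" where
  "posZ j p = 3 ^ p * 100 ^ ((j - 1)\<^sup>2)"

definition Z :: "nat \<Rightarrow> 'a::field fa set" where
  "Z j =
    {(\<lambda>w. \<kappa> * mono s w) | \<kappa> s. length s = 100 ^ (j\<^sup>2) - 1 \<and>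
        (\<exists>p q. p < q \<and> q \<le> j \<and> s ! (posZ j p - 1) = s ! (posZ j q - 1))}
  \<union> {(\<lambda>w. \<kappa> * (mono s1 w + mono s2 w)) | \<kappa> s1 s2.
        length s1 = 100 ^ (j\<^sup>2) - 1 \<and> length s2 = 100 ^ (j\<^sup>2) - 1 \<and>
        (\<exists>p q l1 l2. p < q \<and> q \<le> j \<and> l2 < l1 \<and>
           s1 ! (posZ j p - 1) = l1 \<and> s1 ! (posZ j q - 1) = l2 \<and>
           s2 ! (posZ j p - 1) = l2 \<and> s2 ! (posZ j q - 1) = l1 \<and>
           (\<forall>i < length s1. i \<noteq> posZ j p - 1 \<longrightarrow> i \<noteq> posZ j q - 1 \<longrightarrow> s1 ! i = s2 ! i))}"

definition B :: "nat \<Rightarrow> 'a::field fa set" where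
  "B j = kspan {fa_mult (fa_mult u z) v | u z v m.
                 u \<in> Adeg (m * 100 ^ (j\<^sup>2)) \<and> z \<in> Z j \<and> v \<in> Aone}"

definition Bsum :: "nat \<Rightarrow> 'a::field fa set" where
  "Bsum k = kspan (\<Union>j\<in>{1..k}. B j)"

definition cc :: "nat \<Rightarrow> nat \<Rightarrow> nat" where
  "cc k j = (if j = 0 then 0 else if j \<le> k + 1 then 3 ^ (j - 1) * 100 ^ ((k - 1)\<^sup>2)
             else 100 ^ (k\<^sup>2))"

text \<open>A monomial lies in E^\<sigma> = A(\<xi>_1) x_{\<sigma>(c_0)} A(\<xi>_2) ... x_{\<sigma>(c_k)} A(\<xi>_{k+2}) iff
  it has length c_(k+2) - 1 and letter x_{\<sigma>(c_(i-1))} at position c_i for i = 1..k+1.\<close>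
definition inEsig :: "nat \<Rightarrow> (nat \<Rightarrow> nat) \<Rightarrow> nat list \<Rightarrow> bool" where
  "inEsig k \<sigma> s \<longleftrightarrow> length s = cc k (k + 2) - 1 \<and>
     (\<forall>i\<in>{1..k+1}. s ! (cc k i - 1) = \<sigma> (cc k (i - 1)))"

end

theory Submission
  imports Defs
begin

text \<open>
  For a word t in E and a permutation \<sigma> of the labels c_0, ..., c_k, let t^\<sigma> (relabel) be t
  with \<sigma> applied to the distinguished letters x_{c_0}, ..., x_{c_k} at positions c_1, ..., c_{k+1},
  and let \<psi> f (antisymmetrize) be t \<mapsto> \<Sum>_\<sigma> sign \<sigma> f(t^\<sigma>) on E, zero off E. Since
  t^\<sigma> lies in E^\<sigma>, the hypothesis on a says that \<psi> a is the E-part of a; as \<psi> is linear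
  it suffices to show that \<psi> maps B_j into B_j for j < k and kills B_k.

  For j < k every c_i is a multiple of 100^(j^2), so in a generator u z v of B_j, with |u|
  a multiple of 100^(j^2) and z in Z_j of degree 100^(j^2) - 1, no distinguished position
  falls inside z: relabelling only changes u and v, and \<psi>(u z v) = \<plusminus> u' z v'. For j = k
  the factor z fills the whole word. A one-term element of Z_k has equal letters at two
  distinguished positions, which no t^\<sigma> has; the two words of a two-term element differ
  by a transposition of two labels, so their images under \<psi> cancel.
\<close>

section \<open>Positions of the distinguished letters\<close>

lemma cc_pos: "0 < i \<Longrightarrow> 0 < cc k i"
  by (simp add: cc_def)

lemma cc_strict_mono:
  assumes "i < i'" "i' \<le> k + 1"
  shows "cc k i < cc k i'"
proof (cases "i = 0")
  case True
  then show ?thesis using assms cc_pos[of i' k] by (simp add: cc_def)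
next
  case False
  have "(3::nat) ^ (i - 1) < 3 ^ (i' - 1)"
    using assms False by (intro power_strict_increasing) auto
  then show ?thesis using assms False by (simp add: cc_def)
qed

lemma cc_eq_iff: "i \<le> k + 1 \<Longrightarrow> i' \<le> k + 1 \<Longrightarrow> cc k i = cc k i' \<longleftrightarrow> i = i'"
  by (metis cc_strict_mono less_irrefl linorder_neqE_nat)

lemma cc_less_top:
  assumes "1 \<le> k" "i \<le> k + 1"
  shows "cc k i < 100 ^ k\<^sup>2"
proof (cases "i = 0")
  case True
  then show ?thesis by (simp add: cc_def)
next
  case False
  have "(3::nat) ^ (i - 1) \<le> 3 ^ (2 * k - 1)"
    using assms by (intro power_increasing) auto
  also have "\<dots> < 100 ^ (2 * k - 1)"
    using assms by (intro power_strict_mono) auto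
  finally have "cc k i < 100 ^ (2 * k - 1) * 100 ^ (k - 1)\<^sup>2"
    using assms False by (simp add: cc_def)
  also have "\<dots> = 100 ^ k\<^sup>2"
  proof -
    have "k\<^sup>2 = (2 * k - 1) + (k - 1)\<^sup>2"
      using assms by (cases k) (auto simp: power2_eq_square)
    then show ?thesis by (simp add: power_add)
  qed
  finally show ?thesis .
qed

lemma posZ_eq_cc: "p \<le> k \<Longrightarrow> posZ k p = cc k (p + 1)"
  by (simp add: cc_def posZ_def)

lemma power_dvd_cc:
  assumes "1 \<le> j" "j < k" "1 \<le> i" "i \<le> k + 1"
  shows "100 ^ j\<^sup>2 dvd cc k i"
proof -
  have "j\<^sup>2 \<le> (k - 1)\<^sup>2"
    using assms by (intro power_mono) auto
  then have "(100::nat) ^ j\<^sup>2 dvd 100 ^ (k - 1)\<^sup>2"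
    by (rule le_imp_power_dvd)
  then show ?thesis using assms by (simp add: cc_def)
qed

text \<open>0-indexed positions of the distinguished letters: x_{c_(i-1)} sits at index c_i - 1.\<close>

definition slots :: "nat \<Rightarrow> nat set" where
  "slots k = (\<lambda>i. cc k i - 1) ` {1..k + 1}"

lemma slot_beyond_window:
  assumes "1 \<le> j" "j < k" "n \<in> slots k" "m * 100 ^ j\<^sup>2 \<le> n"
  shows "m * 100 ^ j\<^sup>2 + (100 ^ j\<^sup>2 - 1) \<le> n"
proof -
  define N :: nat where "N = 100 ^ j\<^sup>2"
  have "0 < N"
    by (simp add: N_def)
  obtain i where i: "i \<in> {1..k + 1}" "n = cc k i - 1"
    using assms(3) by (auto simp: slots_def)
  obtain r where r: "cc k i = N * r"
    using power_dvd_cc[OF assms(1,2), of i] i by (auto simp: N_def)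
  have "0 < cc k i"
    using i by (simp add: cc_pos)
  then have "m * N < N * r"
    using assms(4) i r unfolding N_def[symmetric] by linarith
  then have "m * N + N \<le> N * r"
    using mult_le_mono2[of "Suc m" r N] by (simp add: mult.commute)
  then show ?thesis
    using i r \<open>0 < N\<close> unfolding N_def[symmetric] by linarith
qed

lemma length_inEsig: "inEsig k \<sigma> t \<Longrightarrow> length t = 100 ^ k\<^sup>2 - 1"
  by (simp add: inEsig_def cc_def)

lemma slot_less_length:
  assumes "inEsig k \<sigma> t" "1 \<le> k" "n \<in> slots k"
  shows "n < length t"
proof -
  obtain i where "i \<in> {1..k + 1}" "n = cc k i - 1"
    using assms(3) by (auto simp: slots_def)
  with cc_less_top[OF assms(2), of i] cc_pos[of i k] show ?thesis
    using length_inEsig[OF assms(1)] by simp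
qed

section \<open>Linear maps and spans\<close>

definition fa_linear :: "('a::field fa \<Rightarrow> 'a fa) \<Rightarrow> bool" where
  "fa_linear h \<longleftrightarrow>
     (\<forall>f g. h (\<lambda>w. f w + g w) = (\<lambda>w. h f w + h g w)) \<and>
     (\<forall>c f. h (\<lambda>w. c * f w) = (\<lambda>w. c * h f w))"

lemma fa_linear_add: "fa_linear h \<Longrightarrow> h (\<lambda>w. f w + g w) = (\<lambda>w. h f w + h g w)"
  by (simp add: fa_linear_def)

lemma fa_linear_smul: "fa_linear h \<Longrightarrow> h (\<lambda>w. c * f w) = (\<lambda>w. c * h f w)"
  by (simp add: fa_linear_def)

lemma fa_linear_zero:
  assumes "fa_linear h"
  shows "h (\<lambda>_. 0) = (\<lambda>_. 0)"
  using fa_linear_smul[OF assms, of 0 "\<lambda>_. 0"] by simp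

lemma fa_linear_comp: "fa_linear h \<Longrightarrow> fa_linear h' \<Longrightarrow> fa_linear (\<lambda>f. h (h' f))"
  by (simp add: fa_linear_def)

lemma fa_linear_mult_left: "fa_linear (\<lambda>f. fa_mult f g)"
  by (simp add: fa_linear_def fa_mult_def sum.distrib sum_distrib_left algebra_simps)

lemma fa_linear_mult_right: "fa_linear (fa_mult f)"
  by (simp add: fa_linear_def fa_mult_def sum.distrib sum_distrib_left algebra_simps)

lemma fa_linear_scale: "fa_linear (\<lambda>f w. c * f w)"
  by (simp add: fa_linear_def algebra_simps)

lemma fa_linear_sandwich: "fa_linear (\<lambda>z. fa_mult (fa_mult u z) v)"
  by (rule fa_linear_comp[OF fa_linear_mult_left fa_linear_mult_right])

lemma kspan_linear_image:
  assumes "fa_linear h" "\<And>f. f \<in> S \<Longrightarrow> h f \<in> kspan T" "f \<in> kspan S"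
  shows "h f \<in> kspan T"
  using assms(3)
proof (induction rule: kspan.induct)
  case zero
  then show ?case by (simp add: fa_linear_zero[OF assms(1)] kspan.zero)
next
  case (gen f)
  then show ?case by (rule assms(2))
next
  case (add f g)
  then show ?case by (simp add: fa_linear_add[OF assms(1)] kspan.add)
next
  case (smul f c)
  then show ?case by (simp add: fa_linear_smul[OF assms(1)] kspan.smul)
qed

lemma kspan_linear_eq:
  assumes "fa_linear h" "fa_linear h'" "\<And>f. f \<in> S \<Longrightarrow> h f = h' f" "f \<in> kspan S"
  shows "h f = h' f"
  using assms(4)
  by (induction rule: kspan.induct)
    (simp_all add: assms(3) fa_linear_zero fa_linear_add fa_linear_smul assms(1,2))

lemma fa_mult_mono: "fa_mult (mono u) (mono v) = mono (u @ v)"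
proof
  fix w
  have factor: "mono u (take i w) * mono v (drop i w) =
      (if i = length u then mono (u @ v) w else 0)" if "i \<le> length w" for i
  proof (cases "i = length u")
    case True
    then have "(take i w = u \<and> drop i w = v) \<longleftrightarrow> w = u @ v"
      by (metis append_eq_conv_conj)
    then show ?thesis using True by (simp add: mono_def, blast)
  next
    case False
    then have "take i w \<noteq> u"
      using that by auto
    then show ?thesis using False by (simp add: mono_def)
  qed
  have "fa_mult (mono u) (mono v) w =
      (\<Sum>i\<le>length w. if i = length u then mono (u @ v) w else 0)"
    unfolding fa_mult_def by (rule sum.cong[OF refl]) (simp add: factor)
  also have "\<dots> = mono (u @ v) w"
    by (auto simp: mono_def)
  finally show "fa_mult (mono u) (mono v) w = mono (u @ v) w" .
qed

lemma fa_mult_mono_Nil_left: "fa_mult (mono []) f = f"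
proof
  fix w
  have "fa_mult (mono []) f w = (\<Sum>i\<le>length w. if i = 0 then f w else 0)"
    unfolding fa_mult_def by (rule sum.cong[OF refl]) (auto simp: mono_def)
  then show "fa_mult (mono []) f w = f w"
    by simp
qed

lemma fa_mult_mono_Nil_right: "fa_mult f (mono []) = f"
proof
  fix w
  have "fa_mult f (mono []) w = (\<Sum>i\<le>length w. if i = length w then f w else 0)"
    unfolding fa_mult_def by (rule sum.cong[OF refl]) (auto simp: mono_def)
  then show "fa_mult f (mono []) w = f w"
    by simp
qed

lemma sandwich_mono: "fa_mult (fa_mult (mono u) (mono s)) (mono v) = mono (u @ s @ v)"
  by (simp add: fa_mult_mono)

section \<open>Relabelling the distinguished letters\<close>

definition labels :: "nat \<Rightarrow> nat set" where
  "labels k = cc k ` {0..k}"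

lemma finite_permutations_labels [simp]: "finite {\<sigma>. \<sigma> permutes labels k}"
  by (simp add: finite_permutations labels_def)

lemma permutes_labels_comp_transpose:
  assumes "\<sigma> permutes labels k" "p < q" "q \<le> k"
  shows "(\<sigma> \<circ> transpose (cc k p) (cc k q)) permutes labels k"
    and "sign (\<sigma> \<circ> transpose (cc k p) (cc k q)) = - sign \<sigma>"
proof -
  have swap: "transpose (cc k p) (cc k q) permutes labels k"
    using assms(2,3) by (intro permutes_swap_id) (auto simp: labels_def)
  then show "(\<sigma> \<circ> transpose (cc k p) (cc k q)) permutes labels k"
    using assms(1) by (rule permutes_compose)
  have "finite (labels k)"
    by (simp add: labels_def)
  then have "sign (\<sigma> \<circ> transpose (cc k p) (cc k q)) = sign \<sigma> * sign (transpose (cc k p) (cc k q))"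
    using assms(1) swap by (intro sign_compose) (auto intro: permutes_imp_permutation)
  then show "sign (\<sigma> \<circ> transpose (cc k p) (cc k q)) = - sign \<sigma>"
    using cc_strict_mono[of p q k] assms(2,3) by (simp add: sign_swap_id)
qed

definition relabel :: "nat \<Rightarrow> (nat \<Rightarrow> nat) \<Rightarrow> nat list \<Rightarrow> nat list" where
  "relabel k \<sigma> t = map (\<lambda>n. if n \<in> slots k then \<sigma> (t ! n) else t ! n) [0..<length t]"

lemma length_relabel [simp]: "length (relabel k \<sigma> t) = length t"
  by (simp add: relabel_def)

lemma nth_relabel:
  "n < length t \<Longrightarrow> relabel k \<sigma> t ! n = (if n \<in> slots k then \<sigma> (t ! n) else t ! n)"
  by (simp add: relabel_def)

lemma relabel_id [simp]: "relabel k id t = t"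
  by (rule nth_equalityI) (auto simp: nth_relabel)

lemma relabel_nth_slot:
  assumes "inEsig k id t" "1 \<le> k" "i \<in> {1..k + 1}"
  shows "relabel k \<sigma> t ! (cc k i - 1) = \<sigma> (cc k (i - 1))"
proof -
  have "cc k i - 1 \<in> slots k"
    using assms(3) by (auto simp: slots_def)
  then show ?thesis
    using assms slot_less_length[OF assms(1,2)] by (simp add: nth_relabel inEsig_def)
qed

lemma inEsig_relabel: "inEsig k id t \<Longrightarrow> 1 \<le> k \<Longrightarrow> inEsig k \<sigma> (relabel k \<sigma> t)"
  using relabel_nth_slot[of k t] by (simp add: inEsig_def)

lemma relabel_eq_iff:
  assumes "inEsig k id t" "inEsig k id t'" "1 \<le> k"
    and "\<sigma> permutes labels k" "\<sigma>' permutes labels k"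
  shows "relabel k \<sigma> t = relabel k \<sigma>' t' \<longleftrightarrow> t = t' \<and> \<sigma> = \<sigma>'"
proof
  assume eq: "relabel k \<sigma> t = relabel k \<sigma>' t'"
  have same_length: "length t = length t'"
    using arg_cong[OF eq, of length] by simp
  have "t ! n = t' ! n" if "n < length t" for n
  proof (cases "n \<in> slots k")
    case True
    then obtain i where "i \<in> {1..k + 1}" "n = cc k i - 1"
      by (auto simp: slots_def)
    then show ?thesis using assms(1,2) by (simp add: inEsig_def)
  next
    case False
    then show ?thesis
      using that same_length arg_cong[OF eq, of "\<lambda>l. l ! n"] by (simp add: nth_relabel)
  qed
  then have "t = t'"
    using same_length by (simp add: nth_equalityI)
  moreover have "\<sigma> x = \<sigma>' x" for x
  proof (cases "x \<in> labels k")
    case True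
    then obtain i where "i \<le> k" "x = cc k i"
      by (auto simp: labels_def)
    then show ?thesis
      using eq relabel_nth_slot[OF assms(1,3), of "i + 1" \<sigma>]
        relabel_nth_slot[OF assms(2,3), of "i + 1" \<sigma>'] by simp
  next
    case False
    then show ?thesis using assms(4,5) by (simp add: permutes_not_in)
  qed
  ultimately show "t = t' \<and> \<sigma> = \<sigma>'"
    by auto
qed simp

lemma relabel_comp_transpose:
  assumes "inEsig k id t" "1 \<le> k" "p < q" "q \<le> k"
  shows "relabel k (\<sigma> \<circ> transpose (cc k p) (cc k q)) t =
    permute_list (transpose (cc k (p + 1) - 1) (cc k (q + 1) - 1)) (relabel k \<sigma> t)"
    (is "?lhs = permute_list (transpose ?a ?b) _")
proof (rule nth_equalityI)
  show "length ?lhs = length (permute_list (transpose ?a ?b) (relabel k \<sigma> t))"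
    by simp
  fix n
  assume "n < length ?lhs"
  then have n: "n < length t"
    by simp
  then have rhs: "permute_list (transpose ?a ?b) (relabel k \<sigma> t) ! n =
      relabel k \<sigma> t ! transpose ?a ?b n"
    by (simp add: permute_list_def)
  consider "n = ?a" | "n = ?b" | "n \<noteq> ?a" "n \<noteq> ?b"
    by blast
  then show "?lhs ! n = permute_list (transpose ?a ?b) (relabel k \<sigma> t) ! n"
  proof cases
    case 1
    have "?lhs ! ?a = \<sigma> (cc k q)"
      using relabel_nth_slot[OF assms(1,2), of "p + 1"] assms(3,4) by simp
    moreover have "relabel k \<sigma> t ! ?b = \<sigma> (cc k q)"
      using relabel_nth_slot[OF assms(1,2), of "q + 1"] assms(4) by simp
    ultimately show ?thesis
      using rhs 1 by simp
  next
    case 2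
    have "?lhs ! ?b = \<sigma> (cc k p)"
      using relabel_nth_slot[OF assms(1,2), of "q + 1"] assms(4) by simp
    moreover have "relabel k \<sigma> t ! ?a = \<sigma> (cc k p)"
      using relabel_nth_slot[OF assms(1,2), of "p + 1"] assms(3,4) by simp
    ultimately show ?thesis
      using rhs 2 by simp
  next
    case 3
    show ?thesis
    proof (cases "n \<in> slots k")
      case True
      then obtain i where i: "i \<in> {1..k + 1}" "n = cc k i - 1"
        by (auto simp: slots_def)
      then have "i - 1 \<noteq> p" "i - 1 \<noteq> q"
        using 3 by auto
      moreover have "i - 1 \<le> k + 1" "p \<le> k + 1" "q \<le> k + 1"
        using i assms(3,4) by auto
      ultimately have "cc k (i - 1) \<noteq> cc k p" "cc k (i - 1) \<noteq> cc k q"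
        by (simp_all add: cc_eq_iff)
      then show ?thesis
        using rhs 3 i relabel_nth_slot[OF assms(1,2) i(1)] by simp
    next
      case False
      then show ?thesis
        using rhs 3 n by (simp add: nth_relabel)
    qed
  qed
qed

definition replace_window :: "nat \<Rightarrow> 'b list \<Rightarrow> 'b list \<Rightarrow> 'b list" where
  "replace_window i s t = take i t @ s @ drop (i + length s) t"

lemma length_replace_window [simp]:
  "i + length s \<le> length t \<Longrightarrow> length (replace_window i s t) = length t"
  by (simp add: replace_window_def)

lemma nth_replace_window:
  "i + length s \<le> length t \<Longrightarrow> n < length t \<Longrightarrow>
    replace_window i s t ! n = (if i \<le> n \<and> n < i + length s then s ! (n - i) else t ! n)"
  by (auto simp: replace_window_def nth_append min_def)

lemma replace_window_append [simp]:
  "length s' = length s \<Longrightarrow> replace_window (length u) s' (u @ s @ v) = u @ s' @ v"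
  by (simp add: replace_window_def)

lemma relabel_replace_window:
  assumes "i + length s \<le> length t" "\<And>n. n \<in> slots k \<Longrightarrow> n < i \<or> i + length s \<le> n"
  shows "relabel k \<sigma> (replace_window i s t) = replace_window i s (relabel k \<sigma> t)"
  using assms(1) by (intro nth_equalityI) (auto simp: nth_relabel nth_replace_window dest: assms(2))

lemma inEsig_replace_window:
  assumes "inEsig k \<sigma> t" "1 \<le> k" "i + length s \<le> length t"
    and "\<And>n. n \<in> slots k \<Longrightarrow> n < i \<or> i + length s \<le> n"
  shows "inEsig k \<sigma> (replace_window i s t)"
proof -
  have "replace_window i s t ! n = t ! n" if "n \<in> slots k" for n
    using assms(3) slot_less_length[OF assms(1,2) that] assms(4)[OF that]
    by (auto simp: nth_replace_window)
  then show ?thesis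
    using assms(1,3) by (simp add: inEsig_def slots_def)
qed

section \<open>The alternating sum over relabellings\<close>

definition antisymmetrize :: "nat \<Rightarrow> 'a::field fa \<Rightarrow> 'a fa" where
  "antisymmetrize k f = (\<lambda>t. if inEsig k id t
     then \<Sum>\<sigma> | \<sigma> permutes labels k. of_int (sign \<sigma>) * f (relabel k \<sigma> t) else 0)"

lemma fa_linear_antisymmetrize: "fa_linear (antisymmetrize k)"
  by (simp add: fa_linear_def antisymmetrize_def fun_eq_iff sum.distrib sum_distrib_left
      algebra_simps)

lemma antisymmetrize_mono_relabel:
  assumes "inEsig k id t" "1 \<le> k" "\<sigma> permutes labels k"
  shows "antisymmetrize k (mono (relabel k \<sigma> t)) = (\<lambda>x. of_int (sign \<sigma>) * mono t x)"
proof
  fix x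
  show "antisymmetrize k (mono (relabel k \<sigma> t)) x = of_int (sign \<sigma>) * mono t x"
  proof (cases "inEsig k id x")
    case False
    then have "x \<noteq> t"
      using assms(1) by auto
    with False show ?thesis
      by (simp add: antisymmetrize_def mono_def)
  next
    case True
    have hit: "mono (relabel k \<sigma> t) (relabel k \<tau> x) = (if \<tau> = \<sigma> then mono t x else 0)"
      if "\<tau> permutes labels k" for \<tau>
      using relabel_eq_iff[OF True assms(1,2) that assms(3)] by (auto simp: mono_def)
    have "antisymmetrize k (mono (relabel k \<sigma> t)) x =
        (\<Sum>\<tau> | \<tau> permutes labels k. of_int (sign \<tau>) * mono (relabel k \<sigma> t) (relabel k \<tau> x))"
      using True by (simp add: antisymmetrize_def)
    also have "\<dots> =
        (\<Sum>\<tau> | \<tau> permutes labels k. if \<tau> = \<sigma> then of_int (sign \<sigma>) * mono t x else 0)"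
      by (rule sum.cong) (simp_all add: hit)
    also have "\<dots> = of_int (sign \<sigma>) * mono t x"
      using assms(3) by simp
    finally show ?thesis .
  qed
qed

lemma antisymmetrize_mono_eq_0:
  assumes "\<And>\<sigma> t. inEsig k id t \<Longrightarrow> \<sigma> permutes labels k \<Longrightarrow> relabel k \<sigma> t \<noteq> w"
  shows "antisymmetrize k (mono w) = (\<lambda>_. 0)"
  using assms by (auto simp: antisymmetrize_def mono_def fun_eq_iff intro!: sum.neutral)

lemma antisymmetrize_mono_wrong_length:
  "length w \<noteq> 100 ^ k\<^sup>2 - 1 \<Longrightarrow> antisymmetrize k (mono w) = (\<lambda>_. 0)"
  by (rule antisymmetrize_mono_eq_0) (auto dest: length_inEsig)

lemma antisymmetrize_mono_permute_slots:
  assumes "1 \<le> k" "p < q" "q \<le> k"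
  shows "antisymmetrize k (mono (permute_list (transpose (cc k (p + 1) - 1) (cc k (q + 1) - 1)) w))
    = (\<lambda>x. - antisymmetrize k (mono w) x)"
proof (cases "length w = 100 ^ k\<^sup>2 - 1")
  case False
  then show ?thesis
    by (simp add: antisymmetrize_mono_wrong_length)
next
  case True
  define \<tau> where "\<tau> = transpose (cc k p) (cc k q)"
  define \<pi> :: "nat list \<Rightarrow> nat list"
    where "\<pi> = permute_list (transpose (cc k (p + 1) - 1) (cc k (q + 1) - 1))"
  have "cc k (p + 1) - 1 < length w" "cc k (q + 1) - 1 < length w"
    using True cc_less_top[OF assms(1), of "p + 1"] cc_less_top[OF assms(1), of "q + 1"]
      cc_pos[of "p + 1" k] cc_pos[of "q + 1" k] assms(2,3) by auto
  then have "transpose (cc k (p + 1) - 1) (cc k (q + 1) - 1) permutes {..<length w}"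
    by (intro permutes_swap_id) auto
  then have involution: "\<pi> (\<pi> w) = w"
    unfolding \<pi>_def by (simp flip: permute_list_compose)
  have swap: "\<pi> (relabel k \<sigma> t) = relabel k (\<sigma> \<circ> \<tau>) t" if "inEsig k id t" for \<sigma> t
    unfolding \<pi>_def \<tau>_def using relabel_comp_transpose[OF that assms] by simp
  show ?thesis
  proof (cases "\<exists>\<sigma> t. inEsig k id t \<and> \<sigma> permutes labels k \<and> relabel k \<sigma> t = w")
    case True
    then obtain \<sigma> t where t: "inEsig k id t" and \<sigma>: "\<sigma> permutes labels k"
      and w: "relabel k \<sigma> t = w"
      by blast
    have "\<pi> w = relabel k (\<sigma> \<circ> \<tau>) t"
      using swap[OF t, of \<sigma>] unfolding w .
    then have "antisymmetrize k (mono (\<pi> w)) = (\<lambda>x. - (of_int (sign \<sigma>) * (mono t x :: 'a)))"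
      using antisymmetrize_mono_relabel[OF t assms(1) permutes_labels_comp_transpose(1)[OF \<sigma> assms(2,3)]]
        permutes_labels_comp_transpose(2)[OF \<sigma> assms(2,3)]
      unfolding \<tau>_def by simp
    moreover have "antisymmetrize k (mono w) = (\<lambda>x. of_int (sign \<sigma>) * (mono t x :: 'a))"
      using antisymmetrize_mono_relabel[OF t assms(1) \<sigma>] unfolding w .
    ultimately show ?thesis
      unfolding \<pi>_def by simp
  next
    case False
    have "relabel k \<sigma> t \<noteq> \<pi> w" if t: "inEsig k id t" and \<sigma>: "\<sigma> permutes labels k" for \<sigma> t
    proof
      assume "relabel k \<sigma> t = \<pi> w"
      then have "relabel k (\<sigma> \<circ> \<tau>) t = w"
        using swap[OF t, of \<sigma>] involution by metis
      then show False
        using False t permutes_labels_comp_transpose(1)[OF \<sigma> assms(2,3)] unfolding \<tau>_def by blast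
    qed
    then show ?thesis
      using False unfolding \<pi>_def by (simp add: antisymmetrize_mono_eq_0)
  qed
qed

lemma antisymmetrize_mono_replace_window:
  assumes "1 \<le> k" "\<And>n. n \<in> slots k \<Longrightarrow> n < length u \<or> length u + length s \<le> n"
    and "inEsig k id t" "\<sigma> permutes labels k" "relabel k \<sigma> t = u @ s @ v"
    and "length s' = length s"
  shows "antisymmetrize k (mono (u @ s' @ v)) =
    (\<lambda>x. of_int (sign \<sigma>) * mono (take (length u) t @ s' @ drop (length u + length s) t) x)"
proof -
  have fits: "length u + length s' \<le> length t"
    using arg_cong[OF assms(5), of length] assms(6) by simp
  have "inEsig k id (replace_window (length u) s' t)"
    using fits assms(2,6) by (intro inEsig_replace_window[OF assms(3,1)]) auto
  moreover have "relabel k \<sigma> (replace_window (length u) s' t) = u @ s' @ v"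
    using fits assms(2,5,6) by (simp add: relabel_replace_window)
  ultimately show ?thesis
    using antisymmetrize_mono_relabel[OF _ assms(1,4)] assms(6)
    by (fastforce simp: replace_window_def)
qed

lemma antisymmetrize_sandwich_window:
  assumes "1 \<le> k" "\<And>n. n \<in> slots k \<Longrightarrow> n < length u \<or> length u + L \<le> n"
    and "z \<in> Adeg L"
  obtains "antisymmetrize k (fa_mult (fa_mult (mono u) z) (mono v)) = (\<lambda>_. 0)"
  | \<sigma> :: "nat \<Rightarrow> nat" and u' v' where "length u' = length u"
      "antisymmetrize k (fa_mult (fa_mult (mono u) z) (mono v)) =
        fa_mult (fa_mult (mono u') (\<lambda>w. of_int (sign \<sigma>) * z w)) (mono v')"
proof -
  let ?h = "\<lambda>z. antisymmetrize k (fa_mult (fa_mult (mono u) z) (mono v))"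
  have lin: "fa_linear ?h"
    by (rule fa_linear_comp[OF fa_linear_antisymmetrize fa_linear_sandwich])
  have z: "z \<in> kspan {mono s | s. length s = L}"
    using assms(3) by (simp add: Adeg_def)
  show thesis
  proof (cases "\<exists>\<sigma> t s\<^sub>0. inEsig k id t \<and> \<sigma> permutes labels k \<and> length s\<^sub>0 = L \<and>
      relabel k \<sigma> t = u @ s\<^sub>0 @ v")
    case True
    then obtain \<sigma> t s\<^sub>0 where t: "inEsig k id t" and \<sigma>: "\<sigma> permutes labels k"
      and s\<^sub>0: "length s\<^sub>0 = L" and w: "relabel k \<sigma> t = u @ s\<^sub>0 @ v"
      by blast
    define u' v' where "u' = take (length u) t" and "v' = drop (length u + L) t"
    let ?c = "of_int (sign \<sigma>)"
    have "length u' = length u"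
      using arg_cong[OF w, of length] by (simp add: u'_def)
    moreover have "?h z = (\<lambda>z. fa_mult (fa_mult (mono u') (\<lambda>w. ?c * z w)) (mono v')) z"
    proof (rule kspan_linear_eq[OF lin _ _ z])
      show "fa_linear (\<lambda>z. fa_mult (fa_mult (mono u') (\<lambda>w. ?c * z w)) (mono v'))"
        by (rule fa_linear_comp[OF fa_linear_sandwich fa_linear_scale])
      fix f :: "'a fa"
      assume "f \<in> {mono s | s. length s = L}"
      then obtain s where "f = mono s" "length s = L"
        by blast
      then show "?h f = fa_mult (fa_mult (mono u') (\<lambda>w. ?c * f w)) (mono v')"
        using antisymmetrize_mono_replace_window[OF assms(1) _ t \<sigma> w, of s] assms(2) s\<^sub>0
        by (simp add: sandwich_mono fa_linear_smul[OF fa_linear_sandwich] u'_def v'_def)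
    qed
    ultimately show thesis
      by (rule that(2))
  next
    case False
    have "?h z = (\<lambda>_ _. 0) z"
      by (rule kspan_linear_eq[OF lin _ _ z])
        (use False in \<open>auto simp: fa_linear_def sandwich_mono intro!: antisymmetrize_mono_eq_0\<close>)
    then show thesis
      using that(1) by simp
  qed
qed

section \<open>Images of the generators of B_j\<close>

lemma Z_cases:
  assumes "z \<in> Z j"
  obtains (single) \<kappa> s p q where "z = (\<lambda>w. \<kappa> * mono s w)" "length s = 100 ^ j\<^sup>2 - 1"
    "p < q" "q \<le> j" "s ! (posZ j p - 1) = s ! (posZ j q - 1)"
  | (pair) \<kappa> s\<^sub>1 s\<^sub>2 p q where "z = (\<lambda>w. \<kappa> * (mono s\<^sub>1 w + mono s\<^sub>2 w))"
    "length s\<^sub>1 = 100 ^ j\<^sup>2 - 1" "length s\<^sub>2 = 100 ^ j\<^sup>2 - 1" "p < q" "q \<le> j"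
    "s\<^sub>1 ! (posZ j q - 1) < s\<^sub>1 ! (posZ j p - 1)"
    "s\<^sub>1 ! (posZ j p - 1) = s\<^sub>2 ! (posZ j q - 1)" "s\<^sub>1 ! (posZ j q - 1) = s\<^sub>2 ! (posZ j p - 1)"
    "\<And>i. i < length s\<^sub>1 \<Longrightarrow> i \<noteq> posZ j p - 1 \<Longrightarrow> i \<noteq> posZ j q - 1 \<Longrightarrow> s\<^sub>1 ! i = s\<^sub>2 ! i"
  using assms unfolding Z_def
proof (elim UnE CollectE exE conjE)
  fix \<kappa> s p q
  assume "z = (\<lambda>w. \<kappa> * mono s w)" "length s = 100 ^ j\<^sup>2 - 1" "p < q" "q \<le> j"
    "s ! (posZ j p - 1) = s ! (posZ j q - 1)"
  then show thesis
    by (rule single)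
next
  fix \<kappa> s\<^sub>1 s\<^sub>2 p q l\<^sub>1 l\<^sub>2
  assume "z = (\<lambda>w. \<kappa> * (mono s\<^sub>1 w + mono s\<^sub>2 w))"
    "length s\<^sub>1 = 100 ^ j\<^sup>2 - 1" "length s\<^sub>2 = 100 ^ j\<^sup>2 - 1" "p < q" "q \<le> j"
    "s\<^sub>1 ! (posZ j p - 1) = l\<^sub>1" "s\<^sub>1 ! (posZ j q - 1) = l\<^sub>2"
    "s\<^sub>2 ! (posZ j p - 1) = l\<^sub>2" "s\<^sub>2 ! (posZ j q - 1) = l\<^sub>1" "l\<^sub>2 < l\<^sub>1"
    "\<forall>i < length s\<^sub>1. i \<noteq> posZ j p - 1 \<longrightarrow> i \<noteq> posZ j q - 1 \<longrightarrow> s\<^sub>1 ! i = s\<^sub>2 ! i"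
  then show thesis
    by (intro pair[of \<kappa> s\<^sub>1 s\<^sub>2 p q]) auto
qed

lemma Z_subset_Adeg:
  assumes "z \<in> Z j"
  shows "z \<in> Adeg (100 ^ j\<^sup>2 - 1)"
  using assms
proof (cases rule: Z_cases)
  case (single \<kappa> s)
  then show ?thesis
    unfolding single(1) Adeg_def by (intro kspan.smul kspan.gen) auto
next
  case (pair \<kappa> s\<^sub>1 s\<^sub>2)
  then show ?thesis
    unfolding pair(1) Adeg_def by (intro kspan.smul kspan.add kspan.gen) auto
qed

lemma Z_smul:
  assumes "z \<in> Z j"
  shows "(\<lambda>w. c * z w) \<in> Z j"
  using assms
proof (cases rule: Z_cases)
  case (single \<kappa> s p q)
  have "(\<lambda>w. (c * \<kappa>) * mono s w) \<in> Z j"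
    unfolding Z_def using single(2-5) by blast
  then show ?thesis
    using single(1) by (simp add: mult.assoc)
next
  case (pair \<kappa> s\<^sub>1 s\<^sub>2 p q)
  have "(\<lambda>w. (c * \<kappa>) * (mono s\<^sub>1 w + mono s\<^sub>2 w)) \<in> Z j"
  proof -
    have "\<exists>p q l\<^sub>1 l\<^sub>2. p < q \<and> q \<le> j \<and> l\<^sub>2 < l\<^sub>1 \<and>
        s\<^sub>1 ! (posZ j p - 1) = l\<^sub>1 \<and> s\<^sub>1 ! (posZ j q - 1) = l\<^sub>2 \<and>
        s\<^sub>2 ! (posZ j p - 1) = l\<^sub>2 \<and> s\<^sub>2 ! (posZ j q - 1) = l\<^sub>1 \<and>
        (\<forall>i < length s\<^sub>1. i \<noteq> posZ j p - 1 \<longrightarrow> i \<noteq> posZ j q - 1 \<longrightarrow> s\<^sub>1 ! i = s\<^sub>2 ! i)"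
      using pair(4-9)
      by (intro exI[of _ p] exI[of _ q] exI[of _ "s\<^sub>1 ! (posZ j p - 1)"]
          exI[of _ "s\<^sub>1 ! (posZ j q - 1)"]) auto
    then show ?thesis
      unfolding Z_def using pair(2,3) by blast
  qed
  then show ?thesis
    using pair(1) by (simp add: mult.assoc)
qed

lemma sandwich_in_B:
  assumes "length u = m * 100 ^ j\<^sup>2" "z \<in> Z j"
  shows "fa_mult (fa_mult (mono u) z) (mono v) \<in> B j"
proof -
  have "mono u \<in> Adeg (m * 100 ^ j\<^sup>2)"
    unfolding Adeg_def using assms(1) by (auto intro: kspan.gen)
  moreover have "mono v \<in> Aone"
    unfolding Aone_def by (auto intro: kspan.gen)
  ultimately show ?thesis
    unfolding B_def using assms(2) by (blast intro: kspan.gen)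
qed

lemma antisymmetrize_sandwich_below:
  assumes "1 \<le> j" "j < k" "length u = m * 100 ^ j\<^sup>2" "z \<in> Z j"
  shows "antisymmetrize k (fa_mult (fa_mult (mono u) z) (mono v)) \<in> B j"
proof -
  have window: "n < length u \<or> length u + (100 ^ j\<^sup>2 - 1) \<le> n" if "n \<in> slots k" for n
    using slot_beyond_window[OF assms(1,2) that, of m] assms(3) by (metis not_less)
  show ?thesis
  proof (rule antisymmetrize_sandwich_window[OF _ window Z_subset_Adeg[OF assms(4)]])
    show "1 \<le> k"
      using assms(1,2) by simp
  next
    assume "antisymmetrize k (fa_mult (fa_mult (mono u) z) (mono v)) = (\<lambda>_. 0)"
    then show ?thesis
      by (simp add: B_def kspan.zero)
  next
    fix \<sigma> :: "nat \<Rightarrow> nat" and u' v'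
    assume "length u' = length u"
      "antisymmetrize k (fa_mult (fa_mult (mono u) z) (mono v)) =
        fa_mult (fa_mult (mono u') (\<lambda>w. of_int (sign \<sigma>) * z w)) (mono v')"
    then show ?thesis
      using sandwich_in_B[OF _ Z_smul[OF assms(4)]] assms(3) by simp
  qed
qed

lemma antisymmetrize_Z_top:
  assumes "1 \<le> k" "z \<in> Z k"
  shows "antisymmetrize k z = (\<lambda>_. 0)"
  using assms(2)
proof (cases rule: Z_cases)
  case (single \<kappa> s p q)
  have "relabel k \<sigma> t \<noteq> s" if t: "inEsig k id t" and \<sigma>: "\<sigma> permutes labels k" for \<sigma> t
  proof
    assume s: "relabel k \<sigma> t = s"
    have "s ! (posZ k p - 1) = \<sigma> (cc k p)" "s ! (posZ k q - 1) = \<sigma> (cc k q)"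
      using relabel_nth_slot[OF t assms(1), of "p + 1" \<sigma>]
        relabel_nth_slot[OF t assms(1), of "q + 1" \<sigma>] single(3,4) s
      by (simp_all add: posZ_eq_cc)
    then have "cc k p = cc k q"
      using single(5) permutes_inj[OF \<sigma>] by (simp add: inj_eq)
    then show False
      using cc_strict_mono[of p q k] single(3,4) by simp
  qed
  then have "antisymmetrize k (mono s :: 'a fa) = (\<lambda>_. 0)"
    by (rule antisymmetrize_mono_eq_0)
  then show ?thesis
    using single(1) by (simp add: fa_linear_smul[OF fa_linear_antisymmetrize])
next
  case (pair \<kappa> s\<^sub>1 s\<^sub>2 p q)
  let ?a = "cc k (p + 1) - 1" and ?b = "cc k (q + 1) - 1"
  have slots: "posZ k p - 1 = ?a" "posZ k q - 1 = ?b"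
    using pair(4,5) by (simp_all add: posZ_eq_cc)
  have "?a < length s\<^sub>1" "?b < length s\<^sub>1"
    using cc_less_top[OF assms(1), of "p + 1"] cc_less_top[OF assms(1), of "q + 1"]
      cc_pos[of "p + 1" k] cc_pos[of "q + 1" k] pair(2,4,5) by auto
  then have "s\<^sub>2 = permute_list (transpose ?a ?b) s\<^sub>1"
    using pair(2,3,7-9) unfolding slots
    by (intro nth_equalityI) (auto simp: permute_list_def transpose_def)
  then have "antisymmetrize k (mono s\<^sub>2 :: 'a fa) = (\<lambda>x. - antisymmetrize k (mono s\<^sub>1) x)"
    using antisymmetrize_mono_permute_slots[OF assms(1) pair(4,5)] by simp
  then show ?thesis
    using pair(1)
    by (simp add: fa_linear_smul[OF fa_linear_antisymmetrize] fa_linear_add[OF fa_linear_antisymmetrize])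
qed

lemma antisymmetrize_sandwich_top:
  assumes "1 \<le> k" "z \<in> Z k"
  shows "antisymmetrize k (fa_mult (fa_mult (mono u) z) (mono v)) = (\<lambda>_. 0)"
proof (cases "u = [] \<and> v = []")
  case True
  then show ?thesis
    using antisymmetrize_Z_top[OF assms] by (simp add: fa_mult_mono_Nil_left fa_mult_mono_Nil_right)
next
  case False
  have "antisymmetrize k (fa_mult (fa_mult (mono u) z) (mono v)) = (\<lambda>_ _. 0) z"
  proof (rule kspan_linear_eq[OF fa_linear_comp[OF fa_linear_antisymmetrize fa_linear_sandwich] _ _
        Z_subset_Adeg[OF assms(2), unfolded Adeg_def]])
    fix f :: "'a fa"
    assume "f \<in> {mono s | s. length s = 100 ^ k\<^sup>2 - 1}"
    then obtain s where f: "f = mono s" and s: "length s = 100 ^ k\<^sup>2 - 1"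
      by blast
    have "length (u @ s @ v) \<noteq> length s"
      using False by auto
    then show "antisymmetrize k (fa_mult (fa_mult (mono u) f) (mono v)) = (\<lambda>_ _. 0) f"
      unfolding f s by (simp add: sandwich_mono antisymmetrize_mono_wrong_length)
  qed (simp add: fa_linear_def)
  then show ?thesis
    by simp
qed

lemma antisymmetrize_sandwich:
  assumes "1 \<le> j" "j \<le> k" "length u = m * 100 ^ j\<^sup>2" "z \<in> Z j"
  shows "antisymmetrize k (fa_mult (fa_mult (mono u) z) (mono v)) \<in> Bsum (k - 1)"
proof (cases "j < k")
  case True
  then have "antisymmetrize k (fa_mult (fa_mult (mono u) z) (mono v)) \<in> B j"
    using antisymmetrize_sandwich_below[OF assms(1) _ assms(3,4)] by blast
  then show ?thesis
    using True assms(1) unfolding Bsum_def by (intro kspan.gen) auto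
next
  case False
  then have "j = k"
    using assms(2) by simp
  then have "antisymmetrize k (fa_mult (fa_mult (mono u) z) (mono v)) = (\<lambda>_. 0)"
    using antisymmetrize_sandwich_top assms(1,4) by blast
  then show ?thesis
    by (simp add: Bsum_def kspan.zero)
qed

lemma antisymmetrize_B:
  assumes "1 \<le> j" "j \<le> k" "f \<in> B j"
  shows "antisymmetrize k f \<in> Bsum (k - 1)"
  unfolding Bsum_def
proof (rule kspan_linear_image[OF fa_linear_antisymmetrize _ assms(3)[unfolded B_def]])
  fix g :: "'a fa"
  assume "g \<in> {fa_mult (fa_mult u z) v | u z v m.
    u \<in> Adeg (m * 100 ^ j\<^sup>2) \<and> z \<in> Z j \<and> v \<in> Aone}"
  then obtain u z v m where g: "g = fa_mult (fa_mult u z) v"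
    and u: "u \<in> Adeg (m * 100 ^ j\<^sup>2)" and z: "z \<in> Z j" and v: "v \<in> Aone"
    by blast
  have "antisymmetrize k (fa_mult (fa_mult (mono u\<^sub>0) z) v) \<in> kspan (\<Union>i\<in>{1..k - 1}. B i)"
    if "length u\<^sub>0 = m * 100 ^ j\<^sup>2" for u\<^sub>0
  proof (rule kspan_linear_image[OF fa_linear_comp[OF fa_linear_antisymmetrize fa_linear_mult_right]
        _ v[unfolded Aone_def]])
    fix h :: "'a fa"
    assume "h \<in> range mono"
    then show "antisymmetrize k (fa_mult (fa_mult (mono u\<^sub>0) z) h) \<in> kspan (\<Union>i\<in>{1..k - 1}. B i)"
      using antisymmetrize_sandwich[OF assms(1,2) that z] unfolding Bsum_def by auto
  qed
  note monomial_u = this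
  show "antisymmetrize k g \<in> kspan (\<Union>i\<in>{1..k - 1}. B i)"
    unfolding g
  proof (rule kspan_linear_image[OF fa_linear_comp[OF fa_linear_antisymmetrize
        fa_linear_comp[OF fa_linear_mult_left fa_linear_mult_left]] _ u[unfolded Adeg_def]])
    fix h :: "'a fa"
    assume "h \<in> {mono s | s. length s = m * 100 ^ j\<^sup>2}"
    then show "antisymmetrize k (fa_mult (fa_mult h z) v) \<in> kspan (\<Union>i\<in>{1..k - 1}. B i)"
      using monomial_u unfolding Bsum_def by auto
  qed
qed

lemma antisymmetrize_Bsum:
  assumes "f \<in> Bsum k"
  shows "antisymmetrize k f \<in> Bsum (k - 1)"
  unfolding Bsum_def[of "k - 1"]
proof (rule kspan_linear_image[OF fa_linear_antisymmetrize _ assms[unfolded Bsum_def]])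
  fix g :: "'a fa"
  assume "g \<in> (\<Union>j\<in>{1..k}. B j)"
  then show "antisymmetrize k g \<in> kspan (\<Union>j\<in>{1..k - 1}. B j)"
    using antisymmetrize_B unfolding Bsum_def by auto
qed

lemma antisymmetrize_eq_restrict:
  assumes "1 \<le> k"
    and "\<And>\<sigma> s. \<sigma> permutes labels k \<Longrightarrow> \<sigma> \<noteq> id \<Longrightarrow> a s \<noteq> 0 \<Longrightarrow> \<not> inEsig k \<sigma> s"
  shows "antisymmetrize k a = (\<lambda>s. if inEsig k id s then a s else 0)"
proof
  fix t
  show "antisymmetrize k a t = (if inEsig k id t then a t else 0)"
  proof (cases "inEsig k id t")
    case True
    have "of_int (sign \<sigma>) * a (relabel k \<sigma> t) = (if \<sigma> = id then a t else 0)"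
      if "\<sigma> permutes labels k" for \<sigma>
      using assms(2)[OF that] inEsig_relabel[OF True assms(1), of \<sigma>] by auto
    then have "antisymmetrize k a t = (\<Sum>\<sigma> | \<sigma> permutes labels k. if \<sigma> = id then a t else 0)"
      using True unfolding antisymmetrize_def by (simp add: sum.cong)
    also have "\<dots> = a t"
      by simp
    finally show ?thesis
      using True by simp
  next
    case False
    then show ?thesis
      by (simp add: antisymmetrize_def)
  qed
qed

theorem mainTheorem7:
  fixes k :: nat and a :: "'a::field fa"
  assumes "k \<ge> 1"
    and "a \<in> Adeg (100 ^ (k\<^sup>2) - 1)"
    and "a \<in> Bsum k"
    and "\<forall>\<sigma>. \<sigma> permutes (cc k ` {0..k}) \<and> \<sigma> \<noteq> id \<longrightarrow>
           (\<forall>s. a s \<noteq> 0 \<longrightarrow> \<not> inEsig k \<sigma> s)"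
  shows "(\<lambda>s. if inEsig k id s then a s else 0) \<in> Bsum (k - 1)"
proof -
  have "antisymmetrize k a = (\<lambda>s. if inEsig k id s then a s else 0)"
    using assms(4) by (intro antisymmetrize_eq_restrict[OF assms(1)]) (auto simp: labels_def)
  with antisymmetrize_Bsum[OF assms(3)] show ?thesis
    by simp
qed

end
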